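(* Let $H(c)$ and $p(c)$ (for $c>0$) be the limits $H(c)=\lim_{N\to\infty}N^{-1}H(\mathbb{G}(N,\lfloor cN\rfloor))$ (in probability) and $p(c)=\lim_{N\to\infty}N^{-1}\log p(N,\lfloor cN\rfloor)$. For each of the Coloring, K-SAT and NAE-K-SAT models there exists a critical value $c^*_H$ such that $H(c)=c$ for $c<c^*_H$ and $H(c)<c$ for $c>c^*_H$. Similarly, there exists $c^*_p$ such that $p(c)=0$ for $c<c^*_p$ and $p(c)<0$ for $c>c^*_p$.
   Context: $[N]=\{1,\dots,N\}$; $\chi=\{0,\dots,q-1\}$. $\mathbb{G}(N,M)$ is the random hypergraph on $[N]$ with $M$ directed $K$-hyperedges chosen independently and uniformly at random from $[N]^K$. For a hypergraph $G=([N],E)$ with edge potentials $H_e$, $H(x)=\sum_{e\in E}H_e(x_e)$ for $x\in\chi^N$ (node potentials are zero in these models) and $H(G)=\max_x H(x)$. Models: $q$-Coloring ($K=2$, $H_e(x,y)=1$ if $x\ne y$, $0$ if $x=y$); K-SAT ($q=2$; for each hyperedge independently $a_e$ uniform in $\{0,1\}^K$, $H_e(a_e)=0$, $H_e=1$ otherwise); NAE-K-SAT ($q=2$; $H_e(a_e)=H_e(\mathbf 1-a_e)=0$, $H_e=1$ otherwise). $p(N,M)=\mathbb{P}(H(\mathbb{G}(N,M))=M)$. The limits $H(c)$ and $p(c)$ exist for every $c>0$, and $H$ is Lipschitz continuous with constant $1$. *)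

theory Defs
  imports "HOL-Analysis.Analysis"
begin

text \<open>
A (labelled) hyperedge is a pair (v, a): v is the ordered K-tuple of vertices
(vertices are 0,...,N-1, i.e. [N] shifted by one), a is the random label of the
edge potential (for K-SAT / NAE-K-SAT the distinguished vector a_e in {0,1}^K;
for Coloring the label is trivial, the single value []).
All edge potentials take values in {0,1}; sat a xs says H_e(xs) = 1.
\<close>

type_synonym hyperedge = "nat list \<times> nat list"

text \<open>The sample space of G(N,M) together with the random potentials:
M hyperedges, each a uniform element of [N]^K times a uniform label in L.
Independence + uniformity = uniform distribution on this finite set.\<close>
definition instances :: "nat \<Rightarrow> nat list set \<Rightarrow> nat \<Rightarrow> nat \<Rightarrow> hyperedge list set" where
  "instances K L N M = {G. length G = M \<and>
      (\<forall>(v, a) \<in> set G. length v = K \<and> set v \<subseteq> {0..<N} \<and> a \<in> L)}"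

definition Hval :: "(nat list \<Rightarrow> nat list \<Rightarrow> bool) \<Rightarrow> hyperedge list \<Rightarrow> (nat \<Rightarrow> nat) \<Rightarrow> nat" where
  "Hval sat G x = length (filter (\<lambda>(v, a). sat a (map x v)) G)"

definition energy :: "nat \<Rightarrow> (nat list \<Rightarrow> nat list \<Rightarrow> bool) \<Rightarrow> nat \<Rightarrow> hyperedge list \<Rightarrow> nat" where
  "energy q sat N G = Max (Hval sat G ` (Pi\<^sub>E {0..<N} (\<lambda>_. {0..<q})))"

definition prob_ev :: "nat \<Rightarrow> nat list set \<Rightarrow> nat \<Rightarrow> nat \<Rightarrow> (hyperedge list \<Rightarrow> bool) \<Rightarrow> real" where
  "prob_ev K L N M P = real (card {G \<in> instances K L N M. P G}) / real (card (instances K L N M))"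

definition pNM :: "nat \<Rightarrow> nat \<Rightarrow> nat list set \<Rightarrow> (nat list \<Rightarrow> nat list \<Rightarrow> bool) \<Rightarrow> nat \<Rightarrow> nat \<Rightarrow> real" where
  "pNM K q L sat N M = prob_ev K L N M (\<lambda>G. energy q sat N G = M)"

definition is_H_limit :: "nat \<Rightarrow> nat \<Rightarrow> nat list set \<Rightarrow> (nat list \<Rightarrow> nat list \<Rightarrow> bool) \<Rightarrow> (real \<Rightarrow> real) \<Rightarrow> bool" where
  "is_H_limit K q L sat h \<longleftrightarrow> (\<forall>c>0. \<forall>\<epsilon>>0.
      (\<lambda>N. prob_ev K L N (nat \<lfloor>c * real N\<rfloor>)
              (\<lambda>G. \<bar>real (energy q sat N G) / real N - h c\<bar> > \<epsilon>)) \<longlonglongrightarrow> 0)"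

definition is_p_limit :: "nat \<Rightarrow> nat \<Rightarrow> nat list set \<Rightarrow> (nat list \<Rightarrow> nat list \<Rightarrow> bool) \<Rightarrow> (real \<Rightarrow> real) \<Rightarrow> bool" where
  "is_p_limit K q L sat pf \<longleftrightarrow> (\<forall>c>0.
      (\<lambda>N. ln (pNM K q L sat N (nat \<lfloor>c * real N\<rfloor>)) / real N) \<longlonglongrightarrow> pf c)"

definition coloring_labels :: "nat list set" where "coloring_labels = {[]}"
definition coloring_sat :: "nat list \<Rightarrow> nat list \<Rightarrow> bool" where
  "coloring_sat a xs \<longleftrightarrow> xs ! 0 \<noteq> xs ! 1"

definition bool_vectors :: "nat \<Rightarrow> nat list set" where
  "bool_vectors K = {a. length a = K \<and> set a \<subseteq> {0, 1}}"
definition ksat_sat :: "nat list \<Rightarrow> nat list \<Rightarrow> bool" where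
  "ksat_sat a xs \<longleftrightarrow> xs \<noteq> a"
definition naesat_sat :: "nat list \<Rightarrow> nat list \<Rightarrow> bool" where
  "naesat_sat a xs \<longleftrightarrow> xs \<noteq> a \<and> xs \<noteq> map (\<lambda>b. 1 - b) a"

definition H_threshold :: "(real \<Rightarrow> real) \<Rightarrow> bool" where
  "H_threshold h \<longleftrightarrow> (\<exists>cs::real. (\<forall>c. 0 < c \<and> c < cs \<longrightarrow> h c = c) \<and>
                                  (\<forall>c. 0 < c \<and> cs < c \<longrightarrow> h c < c))"
definition p_threshold :: "(real \<Rightarrow> real) \<Rightarrow> bool" where
  "p_threshold pf \<longleftrightarrow> (\<exists>cs::real. (\<forall>c. 0 < c \<and> c < cs \<longrightarrow> pf c = 0) \<and>
                                   (\<forall>c. 0 < c \<and> cs < c \<longrightarrow> pf c < 0))"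

end

theory Submission
  imports Defs
begin

text \<open>
The constraint H(c) \<le> c is trivial, and H(c) - c is nonincreasing: the first \<lfloor>cN\<rfloor> edges of
G(N, \<lfloor>c'N\<rfloor>) form a copy of G(N, \<lfloor>cN\<rfloor>), and the remaining edges raise the energy by at most
(c' - c)N + 1.  Likewise p(N, M) is nonincreasing in M, so p(c) is nonincreasing.  Hence the
critical value is the supremum of the c with H(c) = c (resp. p(c) = 0), and it is finite as soon
as H(c) < c (resp. p(c) < 0) for a single c.  That follows from a first-moment bound: in each
model every assignment violates a fixed fraction r of all possible labelled edges (a large
colour class for Coloring, the edges labelled by the assignment itself for the SAT models), so
the expected number of assignments violating at most N of kN random edges is at most
(2q(1 - r/2)^k)^N, which decays exponentially once k is large.
\<close>

definition edges :: "nat \<Rightarrow> nat list set \<Rightarrow> nat \<Rightarrow> hyperedge set" where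
  "edges K L N = {v. set v \<subseteq> {0..<N} \<and> length v = K} \<times> L"

definition assignments :: "nat \<Rightarrow> nat \<Rightarrow> (nat \<Rightarrow> nat) set" where
  "assignments q N = Pi\<^sub>E {0..<N} (\<lambda>_. {0..<q})"

definition violated :: "(nat list \<Rightarrow> nat list \<Rightarrow> bool) \<Rightarrow> (nat \<Rightarrow> nat) \<Rightarrow> hyperedge \<Rightarrow> bool" where
  "violated sat x e \<longleftrightarrow> \<not> sat (snd e) (map x (fst e))"

definition violations :: "(nat list \<Rightarrow> nat list \<Rightarrow> bool) \<Rightarrow> hyperedge list \<Rightarrow> (nat \<Rightarrow> nat) \<Rightarrow> nat" where
  "violations sat G x = length (filter (violated sat x) G)"

lemma instances_eq_lists: "instances K L N M = {G. set G \<subseteq> edges K L N \<and> length G = M}"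
  unfolding instances_def edges_def by fastforce

lemma length_instance: "G \<in> instances K L N M \<Longrightarrow> length G = M"
  unfolding instances_def by auto

lemma card_vertex_tuples: "card {v. set v \<subseteq> {0..<N} \<and> length v = K} = N ^ K"
  using card_lists_length_eq[of "{0..<N}" K] by simp

lemma prob_ev_nonneg: "0 \<le> prob_ev K L N M P"
  unfolding prob_ev_def by simp

lemma Hval_add_violations: "Hval sat G x + violations sat G x = length G"
proof -
  have "(\<lambda>(v, a). sat a (map x v)) = (\<lambda>e. \<not> violated sat x e)"
    by (auto simp: violated_def)
  then show ?thesis
    unfolding Hval_def violations_def using sum_length_filter_compl[of "\<lambda>e. \<not> violated sat x e" G]
    by simp
qed

lemma Hval_append: "Hval sat (G @ G') x = Hval sat G x + Hval sat G' x"
  unfolding Hval_def by simp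

lemma finite_assignments: "finite (assignments q N)"
  unfolding assignments_def by (auto intro: finite_PiE)

lemma card_assignments: "card (assignments q N) = q ^ N"
  unfolding assignments_def by (simp add: card_PiE)

lemma assignments_nonempty: "q \<ge> 1 \<Longrightarrow> assignments q N \<noteq> {}"
  unfolding assignments_def by (auto simp: PiE_eq_empty_iff)

lemma assignment_less: "x \<in> assignments q N \<Longrightarrow> j < N \<Longrightarrow> x j < q"
  unfolding assignments_def by (auto simp: PiE_iff)

lemma energy_attained: "q \<ge> 1 \<Longrightarrow> \<exists>x\<in>assignments q N. energy q sat N G = Hval sat G x"
  unfolding energy_def assignments_def[symmetric]
  using Max_in[of "Hval sat G ` assignments q N"] finite_assignments assignments_nonempty
  by fastforce

lemma Hval_le_energy: "x \<in> assignments q N \<Longrightarrow> Hval sat G x \<le> energy q sat N G"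
  unfolding energy_def assignments_def[symmetric] using finite_assignments by auto

lemma energy_le_length: "q \<ge> 1 \<Longrightarrow> energy q sat N G \<le> length G"
  using energy_attained[of q N sat G] Hval_add_violations[of sat G] by (metis le_add1)

lemma energy_eq_length:
  assumes "q \<ge> 1" "x \<in> assignments q N" "violations sat G x = 0"
  shows "energy q sat N G = length G"
  using Hval_le_energy[OF assms(2), of sat G] energy_le_length[OF assms(1), of sat N G]
    Hval_add_violations[of sat G x] assms(3) by simp

lemma energy_le_energy_take:
  assumes "q \<ge> 1"
  shows "energy q sat N G \<le> energy q sat N (take M G) + (length G - M)"
proof -
  obtain x where x: "x \<in> assignments q N" "energy q sat N G = Hval sat G x"
    using energy_attained[OF assms] by blast
  have "Hval sat G x = Hval sat (take M G) x + Hval sat (drop M G) x"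
    using Hval_append[of sat "take M G" "drop M G" x] by simp
  also have "Hval sat (drop M G) x \<le> length G - M"
    using Hval_add_violations[of sat "drop M G" x] by simp
  also have "Hval sat (take M G) x \<le> energy q sat N (take M G)"
    using Hval_le_energy[OF x(1)] .
  finally show ?thesis using x(2) by simp
qed

lemma nat_floor_of_nat_mult: "nat \<lfloor>real k * real N\<rfloor> = k * N"
  by (metis floor_of_nat nat_int of_nat_mult)

lemma nat_floor_mult_mono: "c \<le> c' \<Longrightarrow> nat \<lfloor>c * real N\<rfloor> \<le> nat \<lfloor>c' * real N\<rfloor>"
  by (intro nat_mono floor_mono mult_right_mono) auto

lemma nat_floor_mult_diff_le:
  assumes "0 \<le> c" "c \<le> c'"
  shows "real (nat \<lfloor>c' * real N\<rfloor> - nat \<lfloor>c * real N\<rfloor>) \<le> (c' - c) * real N + 1"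
proof -
  have "real (nat \<lfloor>c' * real N\<rfloor> - nat \<lfloor>c * real N\<rfloor>)
      = real (nat \<lfloor>c' * real N\<rfloor>) - real (nat \<lfloor>c * real N\<rfloor>)"
    using nat_floor_mult_mono[OF assms(2)] by simp
  moreover have "real (nat \<lfloor>c' * real N\<rfloor>) \<le> c' * real N" "c * real N - 1 \<le> real (nat \<lfloor>c * real N\<rfloor>)"
    using assms by simp_all
  ultimately show ?thesis by (simp add: algebra_simps)
qed

lemma threshold_of_antimono:
  fixes f :: "real \<Rightarrow> real"
  assumes nonpos: "\<And>c. 0 < c \<Longrightarrow> f c \<le> 0"
    and antimono: "\<And>c c'. 0 < c \<Longrightarrow> c \<le> c' \<Longrightarrow> f c' \<le> f c"
    and neg: "0 < C" "f C < 0"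
  shows "\<exists>cs. (\<forall>c. 0 < c \<and> c < cs \<longrightarrow> f c = 0) \<and> (\<forall>c. 0 < c \<and> cs < c \<longrightarrow> f c < 0)"
proof -
  define S where "S = insert 0 {c. 0 < c \<and> f c = 0}"
  have bdd: "bdd_above S"
  proof (rule bdd_aboveI)
    fix c assume "c \<in> S"
    then show "c \<le> C" unfolding S_def using antimono[of C c] neg by force
  qed
  show ?thesis
  proof (intro exI[of _ "Sup S"] conjI allI impI)
    fix c assume c: "0 < c \<and> c < Sup S"
    then obtain d where "d \<in> S" "c < d"
      using less_cSup_iff[OF _ bdd] by (auto simp: S_def)
    then show "f c = 0"
      using c antimono[of c d] nonpos[of c] by (auto simp: S_def)
  next
    fix c assume c: "0 < c \<and> Sup S < c"
    then have "c \<notin> S" using cSup_upper[OF _ bdd] by force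
    then have "f c \<noteq> 0" using c by (simp add: S_def)
    with c nonpos[of c] show "f c < 0" by simp
  qed
qed

locale random_instances =
  fixes K :: nat and L :: "nat list set"
  assumes finite_labels: "finite L" and labels_nonempty: "L \<noteq> {}"
begin

lemma finite_edges: "finite (edges K L N)"
  unfolding edges_def using finite_labels by (auto intro: finite_lists_length_eq)

lemma edges_nonempty: "N \<ge> 1 \<Longrightarrow> edges K L N \<noteq> {}"
  unfolding edges_def using labels_nonempty by (auto intro!: exI[of _ "replicate K 0"])

lemma finite_instances: "finite (instances K L N M)"
  unfolding instances_eq_lists by (auto intro: finite_lists_length_eq finite_edges)

lemma card_instances: "card (instances K L N M) = card (edges K L N) ^ M"
  unfolding instances_eq_lists by (auto intro: card_lists_length_eq finite_edges)

lemma card_instances_pos: "N \<ge> 1 \<Longrightarrow> 0 < card (instances K L N M)"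
  using edges_nonempty finite_edges by (simp add: card_instances card_gt_0_iff)

lemma prob_ev_mono:
  "(\<And>G. G \<in> instances K L N M \<Longrightarrow> P G \<Longrightarrow> Q G) \<Longrightarrow> prob_ev K L N M P \<le> prob_ev K L N M Q"
  unfolding prob_ev_def by (intro divide_right_mono) (auto intro!: card_mono finite_instances)

lemma prob_ev_disj_le:
  "prob_ev K L N M (\<lambda>G. P G \<or> Q G) \<le> prob_ev K L N M P + prob_ev K L N M Q"
proof -
  have "{G \<in> instances K L N M. P G \<or> Q G}
      = {G \<in> instances K L N M. P G} \<union> {G \<in> instances K L N M. Q G}" by auto
  then have "card {G \<in> instances K L N M. P G \<or> Q G}
      \<le> card {G \<in> instances K L N M. P G} + card {G \<in> instances K L N M. Q G}"
    by (simp add: card_Un_le)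
  then show ?thesis
    unfolding prob_ev_def by (simp add: add_divide_distrib[symmetric] divide_right_mono)
qed

lemma prob_ev_le_1: "prob_ev K L N M P \<le> 1"
  unfolding prob_ev_def
  by (cases "card (instances K L N M) = 0") (auto simp: divide_le_eq_1 card_mono finite_instances)

lemma exists_instance_if_prob_ev_less_1:
  assumes "N \<ge> 1" "prob_ev K L N M P < 1"
  shows "\<exists>G\<in>instances K L N M. \<not> P G"
proof (rule ccontr)
  assume "\<not> ?thesis"
  then have "{G \<in> instances K L N M. P G} = instances K L N M" by auto
  then have "prob_ev K L N M P = 1" using card_instances_pos[OF assms(1)] by (simp add: prob_ev_def)
  with assms(2) show False by simp
qed

lemma eventually_exists_instance_avoiding:
  assumes "(\<lambda>N. prob_ev K L N (M N) (P N)) \<longlonglongrightarrow> 0" "(\<lambda>N. prob_ev K L N (M N) (Q N)) \<longlonglongrightarrow> 0"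
  shows "\<forall>\<^sub>F N in sequentially. \<exists>G\<in>instances K L N (M N). \<not> P N G \<and> \<not> Q N G"
proof -
  have "(\<lambda>N. prob_ev K L N (M N) (P N) + prob_ev K L N (M N) (Q N)) \<longlonglongrightarrow> 0"
    using tendsto_add[OF assms] by simp
  then have "(\<lambda>N. prob_ev K L N (M N) (\<lambda>G. P N G \<or> Q N G)) \<longlonglongrightarrow> 0"
    by (rule tendsto_sandwich[rotated 2, OF tendsto_const])
      (simp_all add: prob_ev_nonneg prob_ev_disj_le)
  then have "\<forall>\<^sub>F N in sequentially. prob_ev K L N (M N) (\<lambda>G. P N G \<or> Q N G) < 1"
    by (rule order_tendstoD) simp
  with eventually_ge_at_top[of 1] show ?thesis
    by eventually_elim (use exists_instance_if_prob_ev_less_1 in blast)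
qed

lemma instances_prefix_split:
  assumes "M \<le> M'"
  shows "{G \<in> instances K L N M'. P (take M G)}
    = (\<lambda>(G, G'). G @ G') ` ({G \<in> instances K L N M. P G} \<times> instances K L N (M' - M))"
proof (intro equalityI subsetI)
  fix G assume "G \<in> {G \<in> instances K L N M'. P (take M G)}"
  then have "take M G \<in> {G \<in> instances K L N M. P G}" "drop M G \<in> instances K L N (M' - M)"
    using assms unfolding instances_eq_lists by (auto dest: in_set_takeD in_set_dropD)
  then show "G \<in> (\<lambda>(G, G'). G @ G') ` ({G \<in> instances K L N M. P G} \<times> instances K L N (M' - M))"
    by (auto intro!: image_eqI[of _ _ "(take M G, drop M G)"])
qed (use assms in \<open>auto simp: instances_eq_lists\<close>)

lemma prob_ev_take:
  assumes "M \<le> M'" "N \<ge> 1"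
  shows "prob_ev K L N M' (\<lambda>G. P (take M G)) = prob_ev K L N M P"
proof -
  have "inj_on (\<lambda>(G, G'). G @ G') ({G \<in> instances K L N M. P G} \<times> instances K L N (M' - M))"
    unfolding inj_on_def instances_eq_lists by auto
  then have "card {G \<in> instances K L N M'. P (take M G)}
      = card {G \<in> instances K L N M. P G} * card (instances K L N (M' - M))"
    by (simp add: instances_prefix_split[OF assms(1)] card_image card_cartesian_product)
  moreover have "card (instances K L N M') = card (instances K L N M) * card (instances K L N (M' - M))"
    using assms(1) by (simp add: card_instances power_add[symmetric])
  ultimately show ?thesis
    unfolding prob_ev_def using card_instances_pos[OF assms(2)] by simp
qed

lemma sum_power_violations:
  fixes s :: real
  shows "(\<Sum>G\<in>instances K L N M. s ^ violations sat G x)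
    = (real (card (edges K L N)) - (1 - s) * real (card {e \<in> edges K L N. violated sat x e})) ^ M"
proof (induction M)
  case 0
  have "instances K L N 0 = {[]}" unfolding instances_eq_lists by auto
  then show ?case by (simp add: violations_def)
next
  case (Suc M)
  let ?E = "edges K L N" and ?I = "instances K L N M"
  have split: "instances K L N (Suc M) = (\<lambda>(G, e). e # G) ` (?I \<times> ?E)"
    unfolding instances_eq_lists by (rule lists_length_Suc_eq)
  have inj: "inj_on (\<lambda>(G, e). e # G) (?I \<times> ?E)" by (auto simp: inj_on_def)
  have "(\<Sum>G\<in>instances K L N (Suc M). s ^ violations sat G x)
      = (\<Sum>p\<in>?I \<times> ?E. s ^ violations sat (snd p # fst p) x)"
    unfolding split by (subst sum.reindex[OF inj]) (simp add: case_prod_beta)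
  also have "\<dots> = (\<Sum>G\<in>?I. \<Sum>e\<in>?E. s ^ violations sat G x * (if violated sat x e then s else 1))"
    unfolding sum.cartesian_product by (intro sum.cong refl) (auto simp: violations_def)
  also have "\<dots> = (\<Sum>G\<in>?I. s ^ violations sat G x) * (\<Sum>e\<in>?E. if violated sat x e then s else 1)"
    by (rule sum_product[symmetric])
  also have "(\<Sum>e\<in>?E. if violated sat x e then s else 1)
      = (\<Sum>e\<in>?E. 1 - (1 - s) * of_bool (violated sat x e))"
    by (intro sum.cong) auto
  also have "\<dots> = real (card ?E) - (1 - s) * real (card {e \<in> ?E. violated sat x e})"
    using finite_edges by (simp add: sum_subtractf sum_distrib_left[symmetric] Int_def conj_commute)
  finally show ?case using Suc.IH by simp
qed

text \<open>Chernoff-type bound, with weight 1/2 per violated edge.\<close>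

lemma card_few_violations:
  assumes r: "0 \<le> r"
    and fraction: "r * real (card (edges K L N)) \<le> real (card {e \<in> edges K L N. violated sat x e})"
  shows "real (card {G \<in> instances K L N M. violations sat G x \<le> t})
    \<le> 2 ^ t * (real (card (edges K L N)) * (1 - r / 2)) ^ M"
proof -
  let ?E = "real (card (edges K L N))" and ?V = "real (card {e \<in> edges K L N. violated sat x e})"
  have "real (card {G \<in> instances K L N M. violations sat G x \<le> t}) * (1/2) ^ t
      = (\<Sum>G\<in>{G \<in> instances K L N M. violations sat G x \<le> t}. (1/2::real) ^ t)" by simp
  also have "\<dots> \<le> (\<Sum>G\<in>{G \<in> instances K L N M. violations sat G x \<le> t}. (1/2::real) ^ violations sat G x)"
    by (intro sum_mono power_decreasing) simp_all
  also have "\<dots> \<le> (\<Sum>G\<in>instances K L N M. (1/2::real) ^ violations sat G x)"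
    by (rule sum_mono2[OF finite_instances]) auto
  also have "\<dots> = (?E - (1 - 1/2) * ?V) ^ M" by (rule sum_power_violations)
  also have "\<dots> \<le> (?E * (1 - r/2)) ^ M"
  proof (rule power_mono)
    have "?V \<le> ?E" using finite_edges by (simp add: card_mono)
    then show "0 \<le> ?E - (1 - 1/2) * ?V" by simp
  qed (use fraction in \<open>simp add: algebra_simps\<close>)
  finally show ?thesis by (simp add: field_simps)
qed

end

locale random_csp = random_instances +
  fixes q :: nat and sat :: "nat list \<Rightarrow> nat list \<Rightarrow> bool"
  assumes colours_pos: "q \<ge> 1"
begin

text \<open>First-moment bound: a union bound over the q^N assignments.\<close>

lemma prob_ev_energy_near_length_le:
  assumes r: "0 \<le> r" and N: "N \<ge> 1"
    and fraction: "\<And>x. x \<in> assignments q N \<Longrightarrow>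
      r * real (card (edges K L N)) \<le> real (card {e \<in> edges K L N. violated sat x e})"
  shows "prob_ev K L N M (\<lambda>G. M \<le> energy q sat N G + t) \<le> real q ^ N * 2 ^ t * (1 - r/2) ^ M"
proof -
  let ?I = "instances K L N M" and ?E = "real (card (edges K L N))"
  have "{G \<in> ?I. M \<le> energy q sat N G + t} \<subseteq> (\<Union>x\<in>assignments q N. {G \<in> ?I. violations sat G x \<le> t})"
  proof
    fix G assume G: "G \<in> {G \<in> ?I. M \<le> energy q sat N G + t}"
    obtain x where "x \<in> assignments q N" "energy q sat N G = Hval sat G x"
      using energy_attained[OF colours_pos] by blast
    with G show "G \<in> (\<Union>x\<in>assignments q N. {G \<in> ?I. violations sat G x \<le> t})"
      using Hval_add_violations[of sat G x] length_instance[of G] by fastforce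
  qed
  then have "card {G \<in> ?I. M \<le> energy q sat N G + t}
      \<le> card (\<Union>x\<in>assignments q N. {G \<in> ?I. violations sat G x \<le> t})"
    by (rule card_mono[rotated]) (simp add: finite_assignments finite_instances)
  also have "\<dots> \<le> (\<Sum>x\<in>assignments q N. card {G \<in> ?I. violations sat G x \<le> t})"
    by (rule card_UN_le[OF finite_assignments])
  finally have "real (card {G \<in> ?I. M \<le> energy q sat N G + t})
      \<le> (\<Sum>x\<in>assignments q N. real (card {G \<in> ?I. violations sat G x \<le> t}))"
    unfolding of_nat_sum[symmetric] of_nat_le_iff .
  also have "\<dots> \<le> (\<Sum>x\<in>assignments q N. 2 ^ t * (?E * (1 - r / 2)) ^ M)"
    using card_few_violations[OF r fraction] by (intro sum_mono)
  also have "\<dots> = real q ^ N * 2 ^ t * (1 - r / 2) ^ M * ?E ^ M"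
    by (simp add: card_assignments power_mult_distrib)
  finally show ?thesis
    using card_instances_pos[OF N] by (simp add: prob_ev_def card_instances divide_le_eq)
qed

definition energy_deviates :: "(real \<Rightarrow> real) \<Rightarrow> real \<Rightarrow> real \<Rightarrow> nat \<Rightarrow> hyperedge list \<Rightarrow> bool" where
  "energy_deviates h c \<epsilon> N G \<longleftrightarrow> \<epsilon> < \<bar>real (energy q sat N G) / real N - h c\<bar>"

lemma H_limit_deviation_tendsto_0:
  "is_H_limit K q L sat h \<Longrightarrow> 0 < c \<Longrightarrow> 0 < \<epsilon> \<Longrightarrow>
    (\<lambda>N. prob_ev K L N (nat \<lfloor>c * real N\<rfloor>) (energy_deviates h c \<epsilon> N)) \<longlonglongrightarrow> 0"
  unfolding is_H_limit_def energy_deviates_def[abs_def] by blast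

lemma H_limit_le:
  assumes lim: "is_H_limit K q L sat h" and c: "0 < c"
  shows "h c \<le> c"
proof (rule field_le_epsilon)
  fix \<epsilon> :: real assume "0 < \<epsilon>"
  note deviation = H_limit_deviation_tendsto_0[OF lim c this]
  from eventually_happens'[OF sequentially_bot eventually_exists_instance_avoiding[OF deviation deviation]]
  obtain N G where G: "G \<in> instances K L N (nat \<lfloor>c * real N\<rfloor>)"
    and typical: "\<bar>real (energy q sat N G) / real N - h c\<bar> \<le> \<epsilon>"
    by (auto simp: energy_deviates_def not_less)
  have "real (energy q sat N G) \<le> real (nat \<lfloor>c * real N\<rfloor>)"
    using energy_le_length[OF colours_pos, of sat N G] length_instance[OF G] by simp
  also have "\<dots> \<le> c * real N" using c by simp
  finally have "real (energy q sat N G) / real N \<le> c"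
    using c by (cases "N = 0") (auto simp: divide_le_eq)
  then show "h c \<le> c + \<epsilon>" using typical by linarith
qed

lemma H_limit_excess_antimono:
  assumes lim: "is_H_limit K q L sat h" and c: "0 < c" "c \<le> c'"
  shows "h c' - c' \<le> h c - c"
proof (rule field_le_epsilon)
  fix \<epsilon> :: real assume "0 < \<epsilon>"
  then have \<epsilon>: "0 < \<epsilon>/3" by simp
  define M where "M N = nat \<lfloor>c * real N\<rfloor>" for N
  define M' where "M' N = nat \<lfloor>c' * real N\<rfloor>" for N
  have "\<forall>\<^sub>F N in sequentially.
      prob_ev K L N (M' N) (\<lambda>G. energy_deviates h c (\<epsilon>/3) N (take (M N) G))
    = prob_ev K L N (M N) (energy_deviates h c (\<epsilon>/3) N)"
    using eventually_ge_at_top[of 1]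
    by eventually_elim (simp add: prob_ev_take M_def M'_def nat_floor_mult_mono c)
  then have prefix: "(\<lambda>N. prob_ev K L N (M' N)
      (\<lambda>G. energy_deviates h c (\<epsilon>/3) N (take (M N) G))) \<longlonglongrightarrow> 0"
    using H_limit_deviation_tendsto_0[OF lim c(1) \<epsilon>] unfolding M_def by (simp add: tendsto_cong)
  have whole: "(\<lambda>N. prob_ev K L N (M' N) (energy_deviates h c' (\<epsilon>/3) N)) \<longlonglongrightarrow> 0"
    using H_limit_deviation_tendsto_0[OF lim _ \<epsilon>] c unfolding M'_def by simp
  have "\<forall>\<^sub>F N in sequentially. 3 / \<epsilon> < real N"
    by (rule eventually_sequentiallyI[of "nat \<lceil>3 / \<epsilon>\<rceil> + 1"]) linarith
  from eventually_happens'[OF sequentially_bot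
      eventually_conj[OF this eventually_exists_instance_avoiding[OF prefix whole]]]
  obtain N G where N: "3 / \<epsilon> < real N" and G: "G \<in> instances K L N (M' N)"
    and typical_prefix: "\<bar>real (energy q sat N (take (M N) G)) / real N - h c\<bar> \<le> \<epsilon>/3"
    and typical: "\<bar>real (energy q sat N G) / real N - h c'\<bar> \<le> \<epsilon>/3"
    by (auto simp: energy_deviates_def not_less)
  have N_pos: "0 < real N" using N \<open>0 < \<epsilon>\<close> by (smt (verit) divide_pos_pos)
  have "real (energy q sat N G) \<le> real (energy q sat N (take (M N) G)) + real (M' N - M N)"
    using energy_le_energy_take[OF colours_pos, of sat N G "M N"] length_instance[OF G] by linarith
  also have "real (M' N - M N) \<le> (c' - c) * real N + 1"
    unfolding M_def M'_def using nat_floor_mult_diff_le c by simp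
  finally have "real (energy q sat N G) / real N
      \<le> real (energy q sat N (take (M N) G)) / real N + (c' - c) + 1 / real N"
    using N_pos by (simp add: field_simps)
  moreover have "1 / real N < \<epsilon>/3" using N \<open>0 < \<epsilon>\<close> N_pos by (simp add: field_simps)
  ultimately show "h c' - c' \<le> h c - c + \<epsilon>" using typical typical_prefix by linarith
qed

lemma p_limit_nonpos:
  assumes lim: "is_p_limit K q L sat pf" and c: "0 < c"
  shows "pf c \<le> 0"
proof (rule LIMSEQ_le_const2)
  show "(\<lambda>N. ln (pNM K q L sat N (nat \<lfloor>c * real N\<rfloor>)) / real N) \<longlonglongrightarrow> pf c"
    using lim c unfolding is_p_limit_def by blast
  have ln_nonpos: "ln (pNM K q L sat N M) \<le> 0" for N M
    using prob_ev_le_1 prob_ev_nonneg[of K L N M] ln_le_zero_iff unfolding pNM_def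
    by (smt (verit) ln_0)
  then show "\<exists>N0. \<forall>N\<ge>N0. ln (pNM K q L sat N (nat \<lfloor>c * real N\<rfloor>)) / real N \<le> 0"
    by (intro exI[of _ 0] allI impI divide_nonpos_nonneg ln_nonpos) simp
qed

lemma pNM_pos:
  assumes N: "N \<ge> 1" and e: "e \<in> edges K L N" and x: "x \<in> assignments q N" "\<not> violated sat x e"
  shows "0 < pNM K q L sat N M"
proof -
  have "replicate M e \<in> {G \<in> instances K L N M. energy q sat N G = M}"
    using e energy_eq_length[OF colours_pos x(1), of sat "replicate M e"] x(2)
    by (auto simp: instances_eq_lists violations_def)
  then have "0 < card {G \<in> instances K L N M. energy q sat N G = M}"
    using finite_instances by (auto simp: card_gt_0_iff)
  then show ?thesis unfolding pNM_def prob_ev_def using card_instances_pos[OF N] by simp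
qed

text \<open>An instance with M' satisfied edges has its first M edges satisfied as well.\<close>

lemma pNM_antimono:
  assumes N: "N \<ge> 1" and M: "M \<le> M'"
  shows "pNM K q L sat N M' \<le> pNM K q L sat N M"
proof -
  have "pNM K q L sat N M' \<le> prob_ev K L N M' (\<lambda>G. energy q sat N (take M G) = M)"
    unfolding pNM_def
  proof (rule prob_ev_mono)
    fix G assume G: "G \<in> instances K L N M'" "energy q sat N G = M'"
    then have "M' \<le> energy q sat N (take M G) + (M' - M)"
      using energy_le_energy_take[OF colours_pos, of sat N G M] length_instance[OF G(1)] by simp
    moreover have "energy q sat N (take M G) \<le> M"
      using energy_le_length[OF colours_pos, of sat N "take M G"] length_instance[OF G(1)] M by simp
    ultimately show "energy q sat N (take M G) = M" using M by linarith
  qed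
  also have "\<dots> = pNM K q L sat N M" unfolding pNM_def using prob_ev_take[OF M N] .
  finally show ?thesis .
qed

end

locale random_csp_threshold = random_csp +
  fixes r :: real
  assumes fraction_pos: "0 < r" and fraction_le_1: "r \<le> 1"
    and violated_fraction: "\<And>N x. N \<ge> 1 \<Longrightarrow> x \<in> assignments q N \<Longrightarrow>
      r * real (card (edges K L N)) \<le> real (card {e \<in> edges K L N. violated sat x e})"
    and satisfiable_edge: "\<And>N. N \<ge> 2 \<Longrightarrow> \<exists>e\<in>edges K L N. \<exists>x\<in>assignments q N. \<not> violated sat x e"
begin

lemma pNM_pos_if_ge_2:
  assumes "N \<ge> 2"
  shows "0 < pNM K q L sat N M"
proof -
  obtain e x where "e \<in> edges K L N" "x \<in> assignments q N" "\<not> violated sat x e"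
    using satisfiable_edge[OF assms] by blast
  then show ?thesis using assms by (intro pNM_pos) simp_all
qed

text \<open>At edge density k the first-moment bound decays like 2^-N.\<close>

lemma exists_halving_density: "\<exists>k::nat. k \<ge> 1 \<and> 2 * real q * (1 - r/2) ^ k \<le> 1/2"
proof -
  have "(\<lambda>k. 2 * real q * (1 - r/2) ^ k) \<longlonglongrightarrow> 2 * real q * 0"
    using fraction_pos fraction_le_1 by (intro tendsto_mult_left LIMSEQ_power_zero) auto
  then have "\<forall>\<^sub>F k in sequentially. 2 * real q * (1 - r/2) ^ k < 1/2"
    by (intro order_tendstoD(2)) auto
  then obtain k0 where k0: "\<forall>k\<ge>k0. 2 * real q * (1 - r/2) ^ k < 1/2"
    unfolding eventually_sequentially by blast
  then have "2 * real q * (1 - r/2) ^ Suc k0 \<le> 1/2" by (intro less_imp_le k0[rule_format]) simp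
  moreover have "Suc k0 \<ge> 1" by simp
  ultimately show ?thesis by blast
qed

lemma prob_ev_energy_near_length_le_half_pow:
  assumes k: "2 * real q * (1 - r/2) ^ k \<le> 1/2" and N: "N \<ge> 1" and t: "t \<le> N"
  shows "prob_ev K L N (k * N) (\<lambda>G. k * N \<le> energy q sat N G + t) \<le> (1/2) ^ N"
proof -
  have "prob_ev K L N (k * N) (\<lambda>G. k * N \<le> energy q sat N G + t)
      \<le> real q ^ N * 2 ^ t * (1 - r/2) ^ (k * N)"
    using prob_ev_energy_near_length_le[OF less_imp_le[OF fraction_pos] N violated_fraction[OF N]] .
  also have "\<dots> \<le> real q ^ N * 2 ^ N * (1 - r/2) ^ (k * N)"
    using t fraction_pos fraction_le_1 by (intro mult_right_mono mult_left_mono power_increasing) auto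
  also have "\<dots> = (2 * real q * (1 - r/2) ^ k) ^ N"
    by (simp add: power_mult[symmetric] power_mult_distrib mult_ac)
  also have "\<dots> \<le> (1/2) ^ N"
    using k fraction_le_1 by (intro power_mono) auto
  finally show ?thesis .
qed

lemma H_limit_less:
  assumes lim: "is_H_limit K q L sat h" and k: "k \<ge> 1" "2 * real q * (1 - r/2) ^ k \<le> 1/2"
  shows "h (real k) < real k"
proof (rule ccontr)
  assume "\<not> h (real k) < real k"
  have deviation: "(\<lambda>N. prob_ev K L N (k * N) (energy_deviates h (real k) (1/2) N)) \<longlonglongrightarrow> 0"
    using H_limit_deviation_tendsto_0[OF lim, of "real k" "1/2"] k
    by (simp add: nat_floor_of_nat_mult)
  have near_satisfiable: "(\<lambda>N. prob_ev K L N (k * N) (\<lambda>G. k * N \<le> energy q sat N G + N)) \<longlonglongrightarrow> 0"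
  proof (rule tendsto_sandwich[OF _ _ tendsto_const LIMSEQ_power_zero[of "1/2::real"]])
    show "\<forall>\<^sub>F N in sequentially. prob_ev K L N (k * N) (\<lambda>G. k * N \<le> energy q sat N G + N) \<le> (1/2) ^ N"
      using eventually_ge_at_top[of 1]
      by eventually_elim (rule prob_ev_energy_near_length_le_half_pow[OF k(2)], simp_all)
  qed (simp_all add: prob_ev_nonneg)
  have "\<forall>\<^sub>F N in sequentially. 1 \<le> N \<and> (\<exists>G\<in>instances K L N (k * N).
      \<not> energy_deviates h (real k) (1/2) N G \<and> \<not> k * N \<le> energy q sat N G + N)"
    using eventually_ge_at_top eventually_exists_instance_avoiding[OF deviation near_satisfiable]
    by (rule eventually_conj)
  from eventually_happens'[OF sequentially_bot this]
  obtain N G where N: "1 \<le> N"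
    and typical: "\<bar>real (energy q sat N G) / real N - h (real k)\<bar> \<le> 1/2"
    and far: "energy q sat N G + N < k * N"
    by (auto simp: energy_deviates_def not_less)
  have "real k - 1/2 \<le> real (energy q sat N G) / real N"
    using typical \<open>\<not> h (real k) < real k\<close> by linarith
  then have "(real k - 1/2) * real N \<le> real (energy q sat N G)"
    using N by (simp add: field_simps)
  moreover have "real (energy q sat N G) + real N < real k * real N"
    using far by (metis of_nat_add of_nat_less_iff of_nat_mult)
  ultimately show False using N by (simp add: algebra_simps)
qed

lemma p_limit_antimono:
  assumes lim: "is_p_limit K q L sat pf" and c: "0 < c" "c \<le> c'"
  shows "pf c' \<le> pf c"
proof (rule LIMSEQ_le)
  show "(\<lambda>N. ln (pNM K q L sat N (nat \<lfloor>c * real N\<rfloor>)) / real N) \<longlonglongrightarrow> pf c"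
    "(\<lambda>N. ln (pNM K q L sat N (nat \<lfloor>c' * real N\<rfloor>)) / real N) \<longlonglongrightarrow> pf c'"
    using lim c unfolding is_p_limit_def by auto
  show "\<exists>N0. \<forall>N\<ge>N0. ln (pNM K q L sat N (nat \<lfloor>c' * real N\<rfloor>)) / real N
      \<le> ln (pNM K q L sat N (nat \<lfloor>c * real N\<rfloor>)) / real N"
  proof (intro exI[of _ 2] allI impI)
    fix N :: nat assume "2 \<le> N"
    then have "0 < pNM K q L sat N (nat \<lfloor>c' * real N\<rfloor>)"
      by (rule pNM_pos_if_ge_2)
    moreover have "pNM K q L sat N (nat \<lfloor>c' * real N\<rfloor>) \<le> pNM K q L sat N (nat \<lfloor>c * real N\<rfloor>)"
      using pNM_antimono[OF _ nat_floor_mult_mono[OF c(2)]] \<open>2 \<le> N\<close> by simp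
    ultimately show "ln (pNM K q L sat N (nat \<lfloor>c' * real N\<rfloor>)) / real N
        \<le> ln (pNM K q L sat N (nat \<lfloor>c * real N\<rfloor>)) / real N"
      by (simp add: divide_right_mono)
  qed
qed

lemma p_limit_neg:
  assumes lim: "is_p_limit K q L sat pf" and k: "k \<ge> 1" "2 * real q * (1 - r/2) ^ k \<le> 1/2"
  shows "pf (real k) < 0"
proof -
  have "pf (real k) \<le> ln (1/2)"
  proof (rule LIMSEQ_le_const2)
    show "(\<lambda>N. ln (pNM K q L sat N (k * N)) / real N) \<longlonglongrightarrow> pf (real k)"
      using lim k unfolding is_p_limit_def nat_floor_of_nat_mult[symmetric] by simp
    show "\<exists>N0. \<forall>N\<ge>N0. ln (pNM K q L sat N (k * N)) / real N \<le> ln (1/2)"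
    proof (intro exI[of _ 2] allI impI)
      fix N :: nat assume N: "2 \<le> N"
      then have pos: "0 < pNM K q L sat N (k * N)" by (rule pNM_pos_if_ge_2)
      have "pNM K q L sat N (k * N) \<le> prob_ev K L N (k * N) (\<lambda>G. k * N \<le> energy q sat N G + 0)"
        unfolding pNM_def by (rule prob_ev_mono) auto
      also have "\<dots> \<le> (1/2) ^ N"
        using prob_ev_energy_near_length_le_half_pow[OF k(2), of N 0] N by simp
      finally have "ln (pNM K q L sat N (k * N)) \<le> real N * ln (1/2)"
        using pos by (simp add: ln_realpow[symmetric])
      then show "ln (pNM K q L sat N (k * N)) / real N \<le> ln (1/2)"
        using N by (simp add: divide_simps mult.commute)
    qed
  qed
  also have "ln (1/2::real) < 0" by simp
  finally show ?thesis .
qed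

theorem H_limit_threshold:
  assumes lim: "is_H_limit K q L sat h"
  shows "H_threshold h"
proof -
  obtain k where k: "k \<ge> 1" "2 * real q * (1 - r/2) ^ k \<le> 1/2"
    using exists_halving_density by blast
  have "\<exists>cs. (\<forall>c. 0 < c \<and> c < cs \<longrightarrow> h c - c = 0) \<and> (\<forall>c. 0 < c \<and> cs < c \<longrightarrow> h c - c < 0)"
    using H_limit_le[OF lim] H_limit_excess_antimono[OF lim] H_limit_less[OF lim k] k(1)
    by (intro threshold_of_antimono[of _ "real k"]) auto
  then show ?thesis unfolding H_threshold_def by simp
qed

theorem p_limit_threshold:
  assumes lim: "is_p_limit K q L sat pf"
  shows "p_threshold pf"
proof -
  obtain k where k: "k \<ge> 1" "2 * real q * (1 - r/2) ^ k \<le> 1/2"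
    using exists_halving_density by blast
  show ?thesis
    unfolding p_threshold_def
    using p_limit_nonpos[OF lim] p_limit_antimono[OF lim] p_limit_neg[OF lim k] k(1)
    by (intro threshold_of_antimono[of _ "real k"]) auto
qed

end

lemma card_bool_vectors: "card (bool_vectors K) = 2 ^ K"
proof -
  have "bool_vectors K = {xs. set xs \<subseteq> {0, 1} \<and> length xs = K}"
    unfolding bool_vectors_def by auto
  then show ?thesis by (simp add: card_lists_length_eq numeral_2_eq_2)
qed

lemma finite_bool_vectors: "finite (bool_vectors K)"
  using card_bool_vectors by (metis card.infinite zero_less_numeral zero_less_power less_irrefl)

text \<open>
When the values a always violate the label a, each assignment x violates every edge (v, map x v),
a fraction 2^-K of all labelled edges.
\<close>

lemma random_csp_threshold_boolean:
  assumes self_violating: "\<And>a. \<not> sat a a" and zero_satisfies: "a \<in> bool_vectors K" "sat a (replicate K 0)"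
  shows "random_csp_threshold K (bool_vectors K) 2 sat (1 / 2 ^ K)"
proof unfold_locales
  fix N :: nat and x assume N: "N \<ge> 1" and x: "x \<in> assignments 2 N"
  let ?T = "{v. set v \<subseteq> {0..<N} \<and> length v = K}"
  have "(\<lambda>v. (v, map x v)) ` ?T \<subseteq> {e \<in> edges K (bool_vectors K) N. violated sat x e}"
    using assignment_less[OF x] self_violating
    by (fastforce simp: edges_def bool_vectors_def violated_def less_2_cases_iff)
  then have "card ((\<lambda>v. (v, map x v)) ` ?T) \<le> card {e \<in> edges K (bool_vectors K) N. violated sat x e}"
    by (rule card_mono[rotated]) (simp add: edges_def finite_bool_vectors finite_lists_length_eq)
  moreover have "card ((\<lambda>v. (v, map x v)) ` ?T) = N ^ K"
    by (subst card_image) (auto simp: inj_on_def card_vertex_tuples)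
  moreover have "card (edges K (bool_vectors K) N) = N ^ K * 2 ^ K"
    by (simp add: edges_def card_cartesian_product card_vertex_tuples card_bool_vectors)
  ultimately show "1 / 2 ^ K * real (card (edges K (bool_vectors K) N))
      \<le> real (card {e \<in> edges K (bool_vectors K) N. violated sat x e})"
    by simp
next
  fix N :: nat assume "N \<ge> 2"
  then have "(replicate K 0, a) \<in> edges K (bool_vectors K) N" "restrict (\<lambda>_. 0) {0..<N} \<in> assignments 2 N"
    and "\<not> violated sat (restrict (\<lambda>_. 0) {0..<N}) (replicate K 0, a)"
    using zero_satisfies by (auto simp: edges_def assignments_def violated_def map_replicate_const)
  then show "\<exists>e\<in>edges K (bool_vectors K) N. \<exists>x\<in>assignments 2 N. \<not> violated sat x e" by blast
qed (use zero_satisfies(1) in \<open>auto simp: finite_bool_vectors divide_le_eq\<close>)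

lemma random_csp_threshold_ksat:
  assumes "K \<ge> 1"
  shows "random_csp_threshold K (bool_vectors K) 2 ksat_sat (1 / 2 ^ K)"
  using assms by (intro random_csp_threshold_boolean[where a = "replicate K 1"])
    (auto simp: ksat_sat_def bool_vectors_def)

lemma random_csp_threshold_naesat:
  assumes "K \<ge> 2"
  shows "random_csp_threshold K (bool_vectors K) 2 naesat_sat (1 / 2 ^ K)"
proof (rule random_csp_threshold_boolean[where a = "0 # replicate (K - 1) 1"])
  obtain K' where K': "K = Suc (Suc K')" using assms by (metis add_2_eq_Suc le_Suc_ex)
  show "0 # replicate (K - 1) 1 \<in> bool_vectors K" "naesat_sat (0 # replicate (K - 1) 1) (replicate K 0)"
    by (auto simp: K' bool_vectors_def naesat_sat_def)
qed (simp add: naesat_sat_def)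

lemma exists_large_colour_class:
  assumes q: "q \<ge> 1" and x: "x \<in> assignments q N"
  shows "\<exists>i<q. real N / real q \<le> real (card {j \<in> {0..<N}. x j = i})"
proof (rule ccontr)
  assume small: "\<not> ?thesis"
  have "{0..<N} = (\<Union>i\<in>{0..<q}. {j \<in> {0..<N}. x j = i})"
    using assignment_less[OF x] by auto
  then have "real N = real (card (\<Union>i\<in>{0..<q}. {j \<in> {0..<N}. x j = i}))"
    by (metis card_atLeastLessThan diff_zero)
  also have "\<dots> = (\<Sum>i\<in>{0..<q}. real (card {j \<in> {0..<N}. x j = i}))"
    by (subst card_UN_disjoint) auto
  also have "\<dots> < (\<Sum>i\<in>{0..<q}. real N / real q)"
    using small q by (intro sum_strict_mono) auto
  also have "\<dots> = real N" using q by simp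
  finally show False by simp
qed

text \<open>Every assignment violates all edges inside its largest colour class, at least (N/q)^2 of them.\<close>

lemma random_csp_threshold_coloring:
  assumes q: "q \<ge> 2"
  shows "random_csp_threshold 2 coloring_labels q coloring_sat (1 / real q ^ 2)"
proof unfold_locales
  fix N :: nat and x assume x: "x \<in> assignments q N"
  obtain i where i: "real N / real q \<le> real (card {j \<in> {0..<N}. x j = i})"
    using exists_large_colour_class[OF _ x] q by auto
  let ?C = "{j \<in> {0..<N}. x j = i}" and ?f = "\<lambda>(a, b). ([a, b], [] :: nat list)"
  have "?f ` (?C \<times> ?C) \<subseteq> {e \<in> edges 2 coloring_labels N. violated coloring_sat x e}"
    by (auto simp: edges_def coloring_labels_def violated_def coloring_sat_def)
  then have "card (?f ` (?C \<times> ?C))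
      \<le> card {e \<in> edges 2 coloring_labels N. violated coloring_sat x e}"
    by (rule card_mono[rotated]) (simp add: edges_def coloring_labels_def finite_lists_length_eq)
  then have "card ?C ^ 2 \<le> card {e \<in> edges 2 coloring_labels N. violated coloring_sat x e}"
    by (subst (asm) card_image) (auto simp: inj_on_def card_cartesian_product power2_eq_square)
  then have "real (card ?C) ^ 2 \<le> real (card {e \<in> edges 2 coloring_labels N. violated coloring_sat x e})"
    by (simp only: of_nat_power[symmetric] of_nat_le_iff)
  moreover have "(real N / real q) ^ 2 \<le> real (card ?C) ^ 2"
    using i by (intro power_mono) auto
  moreover have "1 / real q ^ 2 * real (card (edges 2 coloring_labels N)) = (real N / real q) ^ 2"
    by (simp add: edges_def coloring_labels_def card_cartesian_product card_vertex_tuples power_divide)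
  ultimately show "1 / real q ^ 2 * real (card (edges 2 coloring_labels N))
      \<le> real (card {e \<in> edges 2 coloring_labels N. violated coloring_sat x e})"
    by linarith
next
  fix N :: nat assume "N \<ge> 2"
  then have "([0, 1], []) \<in> edges 2 coloring_labels N"
    "restrict (\<lambda>j. if j = 0 then 0 else 1) {0..<N} \<in> assignments q N"
    "\<not> violated coloring_sat (restrict (\<lambda>j. if j = 0 then 0 else 1) {0..<N}) ([0, 1], [])"
    using q by (auto simp: edges_def coloring_labels_def assignments_def violated_def coloring_sat_def)
  then show "\<exists>e\<in>edges 2 coloring_labels N. \<exists>x\<in>assignments q N. \<not> violated coloring_sat x e" by blast
qed (use q in \<open>auto simp: coloring_labels_def field_simps\<close>)

theorem corollary1:
  fixes q K :: nat
  assumes "q \<ge> 2" and "K \<ge> 2"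
  shows "(\<forall>h. is_H_limit 2 q coloring_labels coloring_sat h \<longrightarrow> H_threshold h)
       \<and> (\<forall>pf. is_p_limit 2 q coloring_labels coloring_sat pf \<longrightarrow> p_threshold pf)
       \<and> (\<forall>h. is_H_limit K 2 (bool_vectors K) ksat_sat h \<longrightarrow> H_threshold h)
       \<and> (\<forall>pf. is_p_limit K 2 (bool_vectors K) ksat_sat pf \<longrightarrow> p_threshold pf)
       \<and> (\<forall>h. is_H_limit K 2 (bool_vectors K) naesat_sat h \<longrightarrow> H_threshold h)
       \<and> (\<forall>pf. is_p_limit K 2 (bool_vectors K) naesat_sat pf \<longrightarrow> p_threshold pf)"
proof -
  interpret coloring: random_csp_threshold 2 coloring_labels q coloring_sat "1 / real q ^ 2"
    using random_csp_threshold_coloring[OF assms(1)] .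
  interpret ksat: random_csp_threshold K "bool_vectors K" 2 ksat_sat "1 / 2 ^ K"
    using random_csp_threshold_ksat assms(2) by simp
  interpret naesat: random_csp_threshold K "bool_vectors K" 2 naesat_sat "1 / 2 ^ K"
    using random_csp_threshold_naesat[OF assms(2)] .
  show ?thesis
    using coloring.H_limit_threshold coloring.p_limit_threshold ksat.H_limit_threshold
      ksat.p_limit_threshold naesat.H_limit_threshold naesat.p_limit_threshold
    by blast
qed

end
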